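(* Let $\lambda_k\coloneqq-1/k+ik$ for $k\in\mathbb{N}$, and let $A$ be the diagonal operator on $\ell^2$ given by $A(\zeta_k)_{k\in\mathbb{N}}=(\lambda_k\zeta_k)_{k\in\mathbb{N}}$ with domain $D(A)=\{(\zeta_k)\in\ell^2:(\lambda_k\zeta_k)\in\ell^2\}$. Then $A$ generates a polynomially stable $C_0$-semigroup with parameter $\beta=1$, and for every $\alpha>0$, \[ \liminf_{t\to\infty}t^{\alpha/3}\big\|e^{A^{-1}t}(-A)^{-\alpha}\big\|\ge\frac{1}{2^{\alpha/2}}\Big(\frac{\alpha}{3e}\Big)^{\alpha/3}. \]
   Context: A $C_0$-semigroup $(e^{At})_{t\ge0}$ on a Hilbert space is called polynomially stable with parameter $\beta>0$ if it is bounded and there exist $M,t_0>0$ with $\|e^{At}(I-A)^{-1}\|\le M t^{-1/\beta}$ for all $t\ge t_0$. For this diagonal operator, $e^{A^{-1}t}(-A)^{-\alpha}$ is the diagonal operator with entries $e^{t/\lambda_k}(-\lambda_k)^{-\alpha}$ (principal branch). *)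

theory Defs
  imports "HOL-Analysis.Analysis"
begin

text \<open>The Hilbert space l2 = l2(N), modelled as square-summable complex sequences
  indexed by nat (index k :: nat corresponds to the paper's index k+1 in N = {1,2,...}).\<close>

definition l2 :: "(nat \<Rightarrow> complex) set" where
  "l2 = {x. summable (\<lambda>k. (cmod (x k))\<^sup>2)}"

definition l2norm :: "(nat \<Rightarrow> complex) \<Rightarrow> real" where
  "l2norm x = sqrt (\<Sum>k. (cmod (x k))\<^sup>2)"

definition opnorm :: "((nat \<Rightarrow> complex) \<Rightarrow> (nat \<Rightarrow> complex)) \<Rightarrow> real" where
  "opnorm T = (SUP x\<in>{x\<in>l2. l2norm x \<le> 1}. l2norm (T x))"

definition bounded_op :: "((nat \<Rightarrow> complex) \<Rightarrow> (nat \<Rightarrow> complex)) \<Rightarrow> bool" where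
  "bounded_op T \<longleftrightarrow>
     (\<forall>x\<in>l2. T x \<in> l2) \<and>
     (\<forall>x\<in>l2. \<forall>y\<in>l2. T (\<lambda>k. x k + y k) = (\<lambda>k. T x k + T y k)) \<and>
     (\<forall>x\<in>l2. \<forall>c. T (\<lambda>k. c * x k) = (\<lambda>k. c * T x k)) \<and>
     (\<exists>C. \<forall>x\<in>l2. l2norm (T x) \<le> C * l2norm x)"

definition diag :: "(nat \<Rightarrow> complex) \<Rightarrow> (nat \<Rightarrow> complex) \<Rightarrow> (nat \<Rightarrow> complex)" where
  "diag d x = (\<lambda>k. d k * x k)"

definition C0_semigroup :: "(real \<Rightarrow> (nat \<Rightarrow> complex) \<Rightarrow> (nat \<Rightarrow> complex)) \<Rightarrow> bool" where
  "C0_semigroup T \<longleftrightarrow>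
     (\<forall>t\<ge>0. bounded_op (T t)) \<and>
     (\<forall>x\<in>l2. T 0 x = x) \<and>
     (\<forall>s\<ge>0. \<forall>t\<ge>0. \<forall>x\<in>l2. T (s + t) x = T s (T t x)) \<and>
     (\<forall>x\<in>l2. ((\<lambda>t. l2norm (\<lambda>k. T t x k - x k)) \<longlongrightarrow> 0) (at_right 0))"

definition generates :: "((nat \<Rightarrow> complex) \<Rightarrow> (nat \<Rightarrow> complex)) \<Rightarrow> (nat \<Rightarrow> complex) set
    \<Rightarrow> (real \<Rightarrow> (nat \<Rightarrow> complex) \<Rightarrow> (nat \<Rightarrow> complex)) \<Rightarrow> bool" where
  "generates A D T \<longleftrightarrow> C0_semigroup T \<and> D \<subseteq> l2 \<and>
     (\<forall>x\<in>l2. x \<in> D \<longleftrightarrow> (\<exists>y\<in>l2.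
        ((\<lambda>h. l2norm (\<lambda>k. (T h x k - x k) / of_real h - y k)) \<longlongrightarrow> 0) (at_right 0))) \<and>
     (\<forall>x\<in>D. A x \<in> l2 \<and>
        ((\<lambda>h. l2norm (\<lambda>k. (T h x k - x k) / of_real h - A x k)) \<longlongrightarrow> 0) (at_right 0))"

text \<open>Here R is the (bounded, everywhere defined) inverse of I - A : D \<rightarrow> l2.\<close>
definition poly_stable :: "((nat \<Rightarrow> complex) \<Rightarrow> (nat \<Rightarrow> complex)) \<Rightarrow> (nat \<Rightarrow> complex) set
    \<Rightarrow> (real \<Rightarrow> (nat \<Rightarrow> complex) \<Rightarrow> (nat \<Rightarrow> complex)) \<Rightarrow> real \<Rightarrow> bool" where
  "poly_stable A D T \<beta> \<longleftrightarrow>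
     (\<exists>C. \<forall>t\<ge>0. opnorm (T t) \<le> C) \<and>
     (\<exists>R. bounded_op R \<and>
        (\<forall>x\<in>l2. R x \<in> D \<and> (\<lambda>k. R x k - A (R x) k) = x) \<and>
        (\<forall>x\<in>D. R (\<lambda>k. x k - A x k) = x) \<and>
        (\<exists>M t0. M > 0 \<and> t0 > 0 \<and>
           (\<forall>t\<ge>t0. opnorm (\<lambda>x. T t (R x)) \<le> M * t powr (-1 / \<beta>))))"

text \<open>The eigenvalues lambda_k = -1/k + i k, k = 1,2,..., indexed by k :: nat as k+1.\<close>
definition lam :: "nat \<Rightarrow> complex" where
  "lam k = - 1 / of_nat (Suc k) + \<i> * of_nat (Suc k)"

definition domA :: "(nat \<Rightarrow> complex) set" where
  "domA = {x\<in>l2. diag lam x \<in> l2}"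

end

theory Submission
  imports Defs "HOL-Real_Asymp.Real_Asymp"
begin

text \<open>All eigenvalues lie in the closed left half-plane, so the diagonal operators with entries
  exp(t lam_k) form a contraction semigroup; dominated convergence in l2 identifies its generator
  with A on its maximal domain, and the resolvent at 1 is diagonal with entries 1/(1 - lam_k).
  Polynomial stability with beta = 1 follows from |exp(t lam_k)/(1 - lam_k)| <= exp(-t/k)/k <= 1/t.

  For the lower bound, the norm of a diagonal operator dominates each entry, and the k-th entry of
  exp(t A^-1)(-A)^-alpha has modulus exp(-t/(k |lam_k|^2)) |lam_k|^-alpha >= 2^(-alpha/2) exp(-t/k^3) k^-alpha.
  Taking k = ceiling((3t/alpha)^(1/3)), close to the maximiser of exp(-t/k^3) k^-alpha, bounds the
  norm below by 2^(-alpha/2) exp(-alpha/3) ((3t/alpha)^(1/3) + 1)^-alpha, and t^(alpha/3) times this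
  tends to the asserted constant.\<close>

section \<open>Diagonal operators on \<open>\<ell>\<^sup>2\<close>\<close>

lemma l2_diag:
  assumes x: "x \<in> l2" and d: "\<And>k. cmod (d k) \<le> C"
  shows "diag d x \<in> l2" "l2norm (diag d x) \<le> C * l2norm x"
proof -
  have C: "C \<ge> 0" using d[of 0] norm_ge_zero order_trans by blast
  have s: "summable (\<lambda>k. (cmod (x k))\<^sup>2)" using x by (simp add: l2_def)
  have le: "(cmod (diag d x k))\<^sup>2 \<le> C\<^sup>2 * (cmod (x k))\<^sup>2" for k
    unfolding diag_def norm_mult power_mult_distrib
    by (intro mult_right_mono power_mono d) auto
  have sC: "summable (\<lambda>k. C\<^sup>2 * (cmod (x k))\<^sup>2)" using s by (rule summable_mult)
  have sd: "summable (\<lambda>k. (cmod (diag d x k))\<^sup>2)"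
    by (rule summable_comparison_test'[OF sC]) (use le in auto)
  then show "diag d x \<in> l2" by (simp add: l2_def)
  have "(\<Sum>k. (cmod (diag d x k))\<^sup>2) \<le> C\<^sup>2 * (\<Sum>k. (cmod (x k))\<^sup>2)"
    using suminf_le[OF le sd sC] suminf_mult[OF s] by simp
  then have "l2norm (diag d x) \<le> sqrt (C\<^sup>2 * (\<Sum>k. (cmod (x k))\<^sup>2))"
    unfolding l2norm_def by (rule real_sqrt_le_mono)
  also have "\<dots> = C * l2norm x" using C by (simp add: l2norm_def real_sqrt_mult)
  finally show "l2norm (diag d x) \<le> C * l2norm x" .
qed

lemma l2norm_diag_le_on_unit_ball:
  assumes "x \<in> l2" "l2norm x \<le> 1" and d: "\<And>k. cmod (d k) \<le> C"
  shows "l2norm (diag d x) \<le> C"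
proof -
  have "C \<ge> 0" using d[of 0] norm_ge_zero order_trans by blast
  then show ?thesis
    using l2_diag(2)[where d=d and C=C, OF \<open>x \<in> l2\<close> d] mult_left_mono[OF \<open>l2norm x \<le> 1\<close>]
    by fastforce
qed

lemma bounded_op_diag:
  assumes "\<And>k. cmod (d k) \<le> C"
  shows "bounded_op (diag d)"
  unfolding bounded_op_def
  using l2_diag[where d=d and C=C, OF _ assms] by (auto simp: diag_def algebra_simps)

lemma opnorm_diag_le:
  assumes "\<And>k. cmod (d k) \<le> C"
  shows "opnorm (diag d) \<le> C"
  unfolding opnorm_def
proof (rule cSUP_least)
  have "(\<lambda>k. 0) \<in> {x \<in> l2. l2norm x \<le> 1}" by (simp add: l2_def l2norm_def)
  then show "{x \<in> l2. l2norm x \<le> 1} \<noteq> {}" by blast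
qed (use l2norm_diag_le_on_unit_ball[where d=d and C=C, OF _ _ assms] in auto)

lemma norm_le_l2norm:
  assumes "x \<in> l2" shows "cmod (x k) \<le> l2norm x"
proof -
  have "(\<Sum>j\<in>{k}. (cmod (x j))\<^sup>2) \<le> (\<Sum>j. (cmod (x j))\<^sup>2)"
    using assms by (intro sum_le_suminf) (auto simp: l2_def)
  then have "sqrt ((cmod (x k))\<^sup>2) \<le> l2norm x"
    unfolding l2norm_def by (intro real_sqrt_le_mono) simp
  then show ?thesis by simp
qed

lemma norm_le_opnorm_diag:
  assumes d: "\<And>k. cmod (d k) \<le> C"
  shows "cmod (d j) \<le> opnorm (diag d)"
proof -
  define e where "e = (\<lambda>k. if k = j then (1::complex) else 0)"
  have "(\<lambda>k. (cmod (e k))\<^sup>2) = (\<lambda>k. if k = j then 1 else 0)" by (auto simp: e_def)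
  then have "(\<lambda>k. (cmod (e k))\<^sup>2) sums 1" using sums_single[of j "\<lambda>_. 1::real"] by simp
  then have e: "e \<in> l2" "l2norm e = 1" by (auto simp: l2_def l2norm_def sums_iff)
  have "cmod (d j) = cmod (diag d e j)" by (simp add: diag_def e_def)
  also have "\<dots> \<le> l2norm (diag d e)"
    using l2_diag(1)[where d=d and C=C, OF \<open>e \<in> l2\<close> d] by (rule norm_le_l2norm)
  also have "\<dots> \<le> opnorm (diag d)"
    unfolding opnorm_def
  proof (rule cSUP_upper)
    show "bdd_above ((\<lambda>x. l2norm (diag d x)) ` {x \<in> l2. l2norm x \<le> 1})"
      using l2norm_diag_le_on_unit_ball[where d=d and C=C, OF _ _ d] by (intro bdd_aboveI2) auto
  qed (use e in auto)
  finally show ?thesis .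
qed

lemma l2_diff:
  assumes "x \<in> l2" "y \<in> l2" shows "(\<lambda>k. x k - y k) \<in> l2"
proof -
  have le: "(cmod (x k - y k))\<^sup>2 \<le> 2 * (cmod (x k))\<^sup>2 + 2 * (cmod (y k))\<^sup>2" for k
  proof -
    have "(cmod (x k - y k))\<^sup>2 \<le> (cmod (x k) + cmod (y k))\<^sup>2"
      by (intro power_mono norm_triangle_ineq4) auto
    also have "\<dots> \<le> 2 * (cmod (x k))\<^sup>2 + 2 * (cmod (y k))\<^sup>2"
      using sum_squares_bound[of "cmod (x k)" "cmod (y k)"] by (simp add: power2_eq_square algebra_simps)
    finally show ?thesis .
  qed
  have "summable (\<lambda>k. 2 * (cmod (x k))\<^sup>2 + 2 * (cmod (y k))\<^sup>2)"
    using assms by (intro summable_add summable_mult) (auto simp: l2_def)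
  then have "summable (\<lambda>k. (cmod (x k - y k))\<^sup>2)"
    by (rule summable_comparison_test') (use le in auto)
  then show ?thesis by (simp add: l2_def)
qed

lemma l2norm_tendsto_0:
  assumes lim: "\<And>k. ((\<lambda>t. q t k) \<longlongrightarrow> 0) F"
    and bound: "eventually (\<lambda>t. \<forall>k. (cmod (q t k))\<^sup>2 \<le> g k) F"
    and "summable g" and "F \<noteq> bot"
  shows "((\<lambda>t. l2norm (q t)) \<longlongrightarrow> 0) F"
proof -
  have "((\<lambda>t. \<Sum>k. (cmod (q t k))\<^sup>2) \<longlongrightarrow> (\<Sum>k. (cmod (0::complex))\<^sup>2)) F"
  proof (rule tannerys_theorem[THEN conjunct2, THEN conjunct2])
    show "((\<lambda>t. (cmod (q t k))\<^sup>2) \<longlongrightarrow> (cmod 0)\<^sup>2) F" for k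
      by (intro tendsto_intros lim)
    show "\<forall>\<^sub>F (k, t) in at_top \<times>\<^sub>F F. norm ((cmod (q t k))\<^sup>2) \<le> g k"
      unfolding eventually_prod_filter using bound
      by (intro exI[of _ "\<lambda>_. True"] exI[of _ "\<lambda>t. \<forall>k. (cmod (q t k))\<^sup>2 \<le> g k"]) auto
  qed fact+
  then have "((\<lambda>t. sqrt (\<Sum>k. (cmod (q t k))\<^sup>2)) \<longlongrightarrow> sqrt 0) F"
    by (intro tendsto_intros) simp
  then show ?thesis by (simp add: l2norm_def)
qed

section \<open>Semigroups generated by diagonal operators\<close>

definition diag_semigroup :: "(nat \<Rightarrow> complex) \<Rightarrow> real \<Rightarrow> (nat \<Rightarrow> complex) \<Rightarrow> nat \<Rightarrow> complex" where
  "diag_semigroup d t = diag (\<lambda>k. exp (of_real t * d k))"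

lemma norm_exp_of_real_mult_le_1:
  assumes "Re z \<le> 0" "t \<ge> 0" shows "cmod (exp (of_real t * z)) \<le> 1"
  using assms by (simp add: mult_nonneg_nonpos)

lemma norm_exp_minus_1_le:
  assumes "Re w \<le> 0" shows "cmod (exp w - 1) \<le> cmod w"
proof -
  \<comment> \<open>\<open>exp\<close> is 1-Lipschitz on the left half-plane, where \<open>|exp'| \<le> 1\<close>.\<close>
  have "cmod (exp w - exp 0) \<le> 1 * cmod (w - 0)"
  proof (rule field_differentiable_bound[OF convex_halfspace_Re_le[of 0]])
    show "(exp has_field_derivative exp z) (at z within {x. Re x \<le> 0})" for z
      by (rule has_field_derivative_at_within[OF DERIV_exp])
  qed (use assms in auto)
  then show ?thesis by simp
qed

lemma norm_exp_of_real_mult_minus_1_le_2: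
  assumes "Re z \<le> 0" "t \<ge> 0" shows "cmod (exp (of_real t * z) - 1) \<le> 2"
proof -
  have "cmod (exp (of_real t * z) - 1) \<le> cmod (exp (of_real t * z)) + 1"
    by (metis norm_one norm_triangle_ineq4)
  then show ?thesis using norm_exp_of_real_mult_le_1[OF assms] by linarith
qed

lemma exp_difference_quotient_tendsto:
  fixes c :: complex
  shows "((\<lambda>h::real. (exp (of_real h * c) - 1) / of_real h) \<longlongrightarrow> c) (at_right 0)"
proof -
  have "((\<lambda>z. exp (z * c)) has_field_derivative exp (0 * c) * c) (at 0)"
    by (auto intro!: derivative_eq_intros)
  then have quotient: "((\<lambda>z. (exp (z * c) - 1) / z) \<longlongrightarrow> c) (at 0)"
    by (simp add: has_field_derivative_iff)
  have "filterlim (\<lambda>h::real. complex_of_real h) (at 0) (at_right 0)"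
    unfolding filterlim_at
    by (auto intro!: tendsto_eq_intros eventually_mono[OF eventually_at_right_less[of 0]])
  from filterlim_compose[OF quotient this] show ?thesis .
qed

lemma diag_semigroup_difference_quotient:
  "(diag_semigroup d h x k - x k) / of_real h = (exp (of_real h * d k) - 1) / of_real h * x k"
  by (simp add: diag_semigroup_def diag_def algebra_simps)

lemma diag_semigroup_difference_quotient_tendsto:
  "((\<lambda>h. (diag_semigroup d h x k - x k) / of_real h) \<longlongrightarrow> d k * x k) (at_right 0)"
  unfolding diag_semigroup_difference_quotient by (intro tendsto_intros exp_difference_quotient_tendsto)

lemma C0_semigroup_diag_semigroup:
  assumes d: "\<And>k. Re (d k) \<le> 0"
  shows "C0_semigroup (diag_semigroup d)"
  unfolding C0_semigroup_def
proof (intro conjI allI impI ballI)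
  show "bounded_op (diag_semigroup d t)" if "t \<ge> 0" for t
    unfolding diag_semigroup_def
    using d that by (intro bounded_op_diag[where C=1] norm_exp_of_real_mult_le_1)
  show "diag_semigroup d (s + t) x = diag_semigroup d s (diag_semigroup d t x)" for s t x
    by (simp add: diag_semigroup_def diag_def distrib_right exp_add mult.assoc)
next
  fix x assume x: "x \<in> l2"
  show "diag_semigroup d 0 x = x" by (simp add: diag_semigroup_def diag_def)
  show "((\<lambda>t. l2norm (\<lambda>k. diag_semigroup d t x k - x k)) \<longlongrightarrow> 0) (at_right 0)"
  proof (rule l2norm_tendsto_0)
    have "((\<lambda>t::real. exp (of_real t * d k) * x k - x k) \<longlongrightarrow> exp (of_real 0 * d k) * x k - x k)
            (at_right 0)" for k
      by (intro tendsto_intros)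
    then show "((\<lambda>t. diag_semigroup d t x k - x k) \<longlongrightarrow> 0) (at_right 0)" for k
      by (simp add: diag_semigroup_def diag_def)
    show "summable (\<lambda>k. 4 * (cmod (x k))\<^sup>2)" using x by (intro summable_mult) (simp add: l2_def)
    have "(cmod (diag_semigroup d t x k - x k))\<^sup>2 \<le> 4 * (cmod (x k))\<^sup>2" if "t > 0" for t k
    proof -
      have "diag_semigroup d t x k - x k = (exp (of_real t * d k) - 1) * x k"
        by (simp add: diag_semigroup_def diag_def algebra_simps)
      then have "cmod (diag_semigroup d t x k - x k) \<le> 2 * cmod (x k)"
        using norm_exp_of_real_mult_minus_1_le_2[OF d, of t k] that
        by (simp add: norm_mult mult_right_mono)
      then have "(cmod (diag_semigroup d t x k - x k))\<^sup>2 \<le> (2 * cmod (x k))\<^sup>2"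
        by (intro power_mono) auto
      then show ?thesis by (simp add: power_mult_distrib)
    qed
    then show "\<forall>\<^sub>F t in at_right 0. \<forall>k. (cmod (diag_semigroup d t x k - x k))\<^sup>2 \<le> 4 * (cmod (x k))\<^sup>2"
      by (auto intro: eventually_mono[OF eventually_at_right_less[of "0::real"]])
  qed simp
qed

lemma norm_exp_difference_quotient_minus_le:
  assumes "Re z \<le> 0" "h > 0"
  shows "cmod ((exp (of_real h * z) - 1) / of_real h - z) \<le> 2 * cmod z"
proof -
  have "cmod (exp (of_real h * z) - 1) \<le> h * cmod z"
    using norm_exp_minus_1_le[of "of_real h * z"] assms by (simp add: norm_mult mult_nonneg_nonpos)
  then have "cmod ((exp (of_real h * z) - 1) / of_real h) \<le> cmod z"
    using assms by (simp add: norm_divide divide_le_eq mult.commute)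
  then show ?thesis
    using norm_triangle_ineq4[of "(exp (of_real h * z) - 1) / of_real h" z] by linarith
qed

lemma diag_semigroup_difference_quotient_tendsto_l2:
  assumes d: "\<And>k. Re (d k) \<le> 0" and x: "diag d x \<in> l2"
  shows "((\<lambda>h. l2norm (\<lambda>k. (diag_semigroup d h x k - x k) / of_real h - diag d x k)) \<longlongrightarrow> 0)
           (at_right 0)"
proof (rule l2norm_tendsto_0)
  have "((\<lambda>h. (diag_semigroup d h x k - x k) / of_real h - diag d x k) \<longlongrightarrow> d k * x k - diag d x k)
          (at_right 0)" for k
    by (intro tendsto_intros diag_semigroup_difference_quotient_tendsto)
  then show "((\<lambda>h. (diag_semigroup d h x k - x k) / of_real h - diag d x k) \<longlongrightarrow> 0) (at_right 0)" for k
    by (simp add: diag_def)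
  show "summable (\<lambda>k. 4 * (cmod (diag d x k))\<^sup>2)" using x by (intro summable_mult) (simp add: l2_def)
  have "(cmod ((diag_semigroup d h x k - x k) / of_real h - diag d x k))\<^sup>2 \<le> 4 * (cmod (diag d x k))\<^sup>2"
    if "h > 0" for h k
  proof -
    have "(diag_semigroup d h x k - x k) / of_real h - diag d x k
          = ((exp (of_real h * d k) - 1) / of_real h - d k) * x k"
      by (simp add: diag_semigroup_difference_quotient diag_def algebra_simps)
    then have "cmod ((diag_semigroup d h x k - x k) / of_real h - diag d x k) \<le> 2 * cmod (diag d x k)"
      using norm_exp_difference_quotient_minus_le[OF d that, of k]
      by (simp add: norm_mult diag_def mult_right_mono mult.assoc[symmetric])
    then have "(cmod ((diag_semigroup d h x k - x k) / of_real h - diag d x k))\<^sup>2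
               \<le> (2 * cmod (diag d x k))\<^sup>2"
      by (intro power_mono) auto
    then show ?thesis by (simp add: power_mult_distrib)
  qed
  then show "\<forall>\<^sub>F h in at_right 0. \<forall>k. (cmod ((diag_semigroup d h x k - x k) / of_real h - diag d x k))\<^sup>2
               \<le> 4 * (cmod (diag d x k))\<^sup>2"
    by (auto intro: eventually_mono[OF eventually_at_right_less[of "0::real"]])
qed simp

lemma diag_eq_if_difference_quotient_tendsto_l2:
  assumes d: "\<And>k. Re (d k) \<le> 0" and x: "x \<in> l2" and y: "y \<in> l2"
    and lim: "((\<lambda>h. l2norm (\<lambda>k. (diag_semigroup d h x k - x k) / of_real h - y k)) \<longlongrightarrow> 0) (at_right 0)"
  shows "diag d x = y"
proof
  fix k
  \<comment> \<open>Convergence in \<open>l2\<close> forces convergence of the \<open>k\<close>-th component, whose limit is \<open>d k * x k\<close>.\<close>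
  let ?q = "\<lambda>h. (diag_semigroup d h x k - x k) / of_real h - y k"
  have "cmod (?q h) \<le> l2norm (\<lambda>k. (diag_semigroup d h x k - x k) / of_real h - y k)" if "h > 0" for h
  proof (rule norm_le_l2norm)
    have "diag (\<lambda>k. (exp (of_real h * d k) - 1) / of_real h) x \<in> l2"
      using norm_exp_of_real_mult_minus_1_le_2[OF d] that
      by (intro l2_diag(1)[OF x, of _ "2 / h"]) (simp add: norm_divide divide_right_mono)
    from l2_diff[OF this y]
    show "(\<lambda>k. (diag_semigroup d h x k - x k) / of_real h - y k) \<in> l2"
      by (simp add: diag_semigroup_difference_quotient diag_def)
  qed
  then have "(?q \<longlongrightarrow> 0) (at_right 0)"
    using tendsto_sandwich[OF _ _ tendsto_const lim, of "\<lambda>h. cmod (?q h)"]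
    by (auto simp: tendsto_norm_zero_iff
        intro: eventually_mono[OF eventually_at_right_less[of "0::real"]])
  moreover have "(?q \<longlongrightarrow> d k * x k - y k) (at_right 0)"
    by (intro tendsto_intros diag_semigroup_difference_quotient_tendsto)
  ultimately have "d k * x k - y k = 0"
    using tendsto_unique[OF trivial_limit_at_right_real] by blast
  then show "diag d x k = y k" by (simp add: diag_def)
qed

lemma generates_diag_semigroup:
  assumes d: "\<And>k. Re (d k) \<le> 0"
  shows "generates (diag d) {x \<in> l2. diag d x \<in> l2} (diag_semigroup d)"
  unfolding generates_def
proof (intro conjI ballI)
  show "C0_semigroup (diag_semigroup d)" by (rule C0_semigroup_diag_semigroup[OF d])
  show "{x \<in> l2. diag d x \<in> l2} \<subseteq> l2" by auto
  fix x assume "x \<in> l2"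
  then show "x \<in> {x \<in> l2. diag d x \<in> l2} \<longleftrightarrow> (\<exists>y\<in>l2.
      ((\<lambda>h. l2norm (\<lambda>k. (diag_semigroup d h x k - x k) / of_real h - y k)) \<longlongrightarrow> 0) (at_right 0))"
    using diag_semigroup_difference_quotient_tendsto_l2[where d=d, OF d]
      diag_eq_if_difference_quotient_tendsto_l2[where d=d, OF d] by blast
next
  fix x assume "x \<in> {x \<in> l2. diag d x \<in> l2}"
  then show "diag d x \<in> l2"
    and "((\<lambda>h. l2norm (\<lambda>k. (diag_semigroup d h x k - x k) / of_real h - diag d x k)) \<longlongrightarrow> 0) (at_right 0)"
    using diag_semigroup_difference_quotient_tendsto_l2[where d=d, OF d] by auto
qed

lemma norm_one_minus_ge_1: "Re z \<le> 0 \<Longrightarrow> 1 \<le> cmod (1 - z)"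
  using complex_Re_le_cmod[of "1 - z"] by simp

lemma diag_resolvent:
  assumes d: "\<And>k. Re (d k) \<le> 0"
  defines "R \<equiv> diag (\<lambda>k. 1 / (1 - d k))"
  shows "bounded_op R"
    and "x \<in> l2 \<Longrightarrow> R x \<in> {x \<in> l2. diag d x \<in> l2}"
    and "(\<lambda>k. R x k - diag d (R x) k) = x"
    and "R (\<lambda>k. x k - diag d x k) = x"
proof -
  have one_minus: "1 \<le> cmod (1 - d k)" "1 - d k \<noteq> 0" for k
    using norm_one_minus_ge_1[OF d, of k] by auto
  have R_bound: "cmod (1 / (1 - d k)) \<le> 1" for k
    using one_minus(1)[of k] by (simp add: norm_divide divide_le_eq)
  show "bounded_op R" unfolding R_def by (rule bounded_op_diag[OF R_bound])
  have AR_bound: "cmod (d k / (1 - d k)) \<le> 2" for k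
  proof -
    have "cmod (d k) \<le> cmod (1 - d k) + 1" using norm_triangle_ineq4[of 1 "1 - d k"] by simp
    also have "\<dots> \<le> 2 * cmod (1 - d k)" using one_minus(1)[of k] by simp
    finally show ?thesis using one_minus(2)[of k] by (simp add: norm_divide divide_le_eq)
  qed
  have "diag d (R x) = diag (\<lambda>k. d k / (1 - d k)) x" by (simp add: R_def diag_def)
  then show "x \<in> l2 \<Longrightarrow> R x \<in> {x \<in> l2. diag d x \<in> l2}"
    using l2_diag(1)[OF _ R_bound, of x] l2_diag(1)[OF _ AR_bound, of x] by (simp add: R_def)
  have "R x k - diag d (R x) k = (1 - d k) * R x k" for k
    by (simp add: diag_def algebra_simps)
  then show "(\<lambda>k. R x k - diag d (R x) k) = x"
    using one_minus(2) by (simp add: R_def diag_def fun_eq_iff)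
  show "R (\<lambda>k. x k - diag d x k) = x"
    using one_minus(2) by (simp add: R_def diag_def fun_eq_iff field_simps)
qed

section \<open>The eigenvalues \<open>-1/k + ik\<close>\<close>

lemma Re_lam: "Re (lam k) = - 1 / real (Suc k)" and Im_lam: "Im (lam k) = real (Suc k)"
  by (simp_all add: lam_def)

lemma Re_lam_le_0: "Re (lam k) \<le> 0"
  by (simp add: Re_lam)

lemma norm_lam_ge: "real (Suc k) \<le> cmod (lam k)"
  using abs_Im_le_cmod[of "lam k"] by (simp add: Im_lam)

lemma norm_one_minus_lam_ge: "real (Suc k) \<le> cmod (1 - lam k)"
  using abs_Im_le_cmod[of "1 - lam k"] by (simp add: Im_lam)

lemma norm_lam_squared: "(cmod (lam k))\<^sup>2 = (real (Suc k))\<^sup>2 + 1 / (real (Suc k))\<^sup>2"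
  by (simp add: cmod_power2 Re_lam Im_lam power_divide)

lemma norm_exp_lam_div_le:
  assumes t: "t > 0" shows "cmod (exp (of_real t * lam k) / (1 - lam k)) \<le> 1 / t"
proof -
  define n where "n = real (Suc k)"
  have n: "n \<ge> 1" by (simp add: n_def)
  have norm_exp: "cmod (exp (of_real t * lam k)) = exp (- t / n)" by (simp add: Re_lam n_def)
  have "cmod (exp (of_real t * lam k) / (1 - lam k)) \<le> exp (- t / n) / n"
    unfolding norm_divide norm_exp using norm_one_minus_lam_ge[of k] n
    by (intro divide_left_mono) (auto simp: n_def intro!: mult_pos_pos)
  also have "\<dots> \<le> 1 / t" \<comment> \<open>\<open>x exp (- x) \<le> 1\<close> with \<open>x = t / n\<close>\<close>
    using exp_ge_add_one_self[of "t / n"] n t by (simp add: exp_minus field_simps)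
  finally show ?thesis .
qed

lemma poly_stable_diag_semigroup_lam: "poly_stable (diag lam) domA (diag_semigroup lam) 1"
  unfolding poly_stable_def
proof (intro conjI exI[of _ "diag (\<lambda>k. 1 / (1 - lam k))"])
  show "\<exists>C. \<forall>t\<ge>0. opnorm (diag_semigroup lam t) \<le> C"
    by (auto simp: diag_semigroup_def Re_lam_le_0
        intro!: exI[of _ 1] opnorm_diag_le norm_exp_of_real_mult_le_1)
  show "bounded_op (diag (\<lambda>k. 1 / (1 - lam k)))"
    by (rule diag_resolvent(1)) (rule Re_lam_le_0)
  show "\<forall>x\<in>l2. diag (\<lambda>k. 1 / (1 - lam k)) x \<in> domA \<and>
      (\<lambda>k. diag (\<lambda>k. 1 / (1 - lam k)) x k - diag lam (diag (\<lambda>k. 1 / (1 - lam k)) x) k) = x"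
    using diag_resolvent(2,3)[of lam] Re_lam_le_0 by (auto simp: domA_def)
  show "\<forall>x\<in>domA. diag (\<lambda>k. 1 / (1 - lam k)) (\<lambda>k. x k - diag lam x k) = x"
    using diag_resolvent(4)[of lam] Re_lam_le_0 by blast
  have "opnorm (\<lambda>x. diag_semigroup lam t (diag (\<lambda>k. 1 / (1 - lam k)) x)) \<le> 1 * t powr (-1 / 1)"
    if "t \<ge> 1" for t
  proof -
    have "(\<lambda>x. diag_semigroup lam t (diag (\<lambda>k. 1 / (1 - lam k)) x))
          = diag (\<lambda>k. exp (of_real t * lam k) / (1 - lam k))"
      by (simp add: diag_semigroup_def diag_def fun_eq_iff)
    moreover have "opnorm (diag (\<lambda>k. exp (of_real t * lam k) / (1 - lam k))) \<le> 1 / t"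
      using that by (intro opnorm_diag_le norm_exp_lam_div_le) auto
    ultimately show ?thesis using that by (simp add: powr_minus_divide)
  qed
  then show "\<exists>M t0. M > 0 \<and> t0 > 0 \<and>
      (\<forall>t\<ge>t0. opnorm (\<lambda>x. diag_semigroup lam t (diag (\<lambda>k. 1 / (1 - lam k)) x)) \<le> M * t powr (-1 / 1))"
    by (intro exI[of _ 1]) auto
qed

lemma norm_exp_div_mult_powr:
  "cmod (exp (of_real t / z) * (- z) powr (- of_real \<alpha>))
     = exp (t * Re z / (cmod z)\<^sup>2) * cmod z powr (- \<alpha>)"
proof -
  have "cmod ((- z) powr (- of_real \<alpha>)) = cmod z powr (- \<alpha>)"
    using norm_powr_real_powr'[of "- of_real \<alpha>" "- z"] by simp
  then show ?thesis by (simp add: norm_mult Re_divide')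
qed

lemma norm_exp_div_lam_mult_powr_le_1:
  assumes "t \<ge> 0" "\<alpha> > 0"
  shows "cmod (exp (of_real t / lam k) * (- lam k) powr (- of_real \<alpha>)) \<le> 1"
proof -
  have "exp (t * Re (lam k) / (cmod (lam k))\<^sup>2) \<le> 1"
    using assms Re_lam_le_0[of k] by (simp add: mult_nonneg_nonpos divide_nonpos_nonneg)
  moreover have "cmod (lam k) powr (- \<alpha>) \<le> 1 powr (- \<alpha>)"
    using norm_lam_ge[of k] assms by (intro powr_mono2') auto
  ultimately show ?thesis
    unfolding norm_exp_div_mult_powr by (simp add: mult_le_one)
qed

lemma Re_lam_div_norm_squared_ge: "- 1 / real (Suc k) ^ 3 \<le> Re (lam k) / (cmod (lam k))\<^sup>2"
proof -
  define n where "n = real (Suc k)"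
  have n: "n \<ge> 1" by (simp add: n_def)
  have "n ^ 3 \<le> n * (n\<^sup>2 + 1 / n\<^sup>2)"
    using n by (simp add: power3_eq_cube power2_eq_square algebra_simps)
  then have "1 / (n * (n\<^sup>2 + 1 / n\<^sup>2)) \<le> 1 / n ^ 3"
    using n by (intro divide_left_mono) (auto intro!: mult_pos_pos add_pos_nonneg)
  moreover have "Re (lam k) / (cmod (lam k))\<^sup>2 = - (1 / (n * (n\<^sup>2 + 1 / n\<^sup>2)))"
    by (simp add: norm_lam_squared Re_lam n_def)
  ultimately show ?thesis by (simp add: n_def)
qed

lemma norm_lam_le: "cmod (lam k) \<le> sqrt 2 * real (Suc k)"
proof -
  define n where "n = real (Suc k)"
  have "1 \<le> n\<^sup>2" by (simp add: n_def one_le_power)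
  then have "1 / n\<^sup>2 \<le> n\<^sup>2" using divide_le_eq_1[of 1 "n\<^sup>2"] by linarith
  then have "(cmod (lam k))\<^sup>2 \<le> (sqrt 2 * n)\<^sup>2"
    unfolding norm_lam_squared n_def[symmetric] by (simp add: power_mult_distrib)
  then show ?thesis unfolding n_def by (rule power2_le_imp_le) simp
qed

lemma norm_exp_div_lam_mult_powr_ge:
  assumes "t \<ge> 0" "\<alpha> > 0"
  shows "exp (- t / real (Suc k) ^ 3) * (2 powr (- \<alpha> / 2) * real (Suc k) powr (- \<alpha>))
         \<le> cmod (exp (of_real t / lam k) * (- lam k) powr (- of_real \<alpha>))"
proof -
  have exp_le: "exp (- t / real (Suc k) ^ 3) \<le> exp (t * Re (lam k) / (cmod (lam k))\<^sup>2)"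
    using mult_left_mono[OF Re_lam_div_norm_squared_ge[of k] \<open>t \<ge> 0\<close>] by simp
  have "(sqrt 2 * real (Suc k)) powr (- \<alpha>) \<le> cmod (lam k) powr (- \<alpha>)"
    using norm_lam_le[of k] norm_lam_ge[of k] assms by (intro powr_mono2') auto
  moreover have "sqrt 2 powr (- \<alpha>) = 2 powr (- \<alpha> / 2)"
    by (simp add: powr_half_sqrt[symmetric] powr_powr)
  ultimately have "2 powr (- \<alpha> / 2) * real (Suc k) powr (- \<alpha>) \<le> cmod (lam k) powr (- \<alpha>)"
    by (simp add: powr_mult)
  with exp_le show ?thesis
    unfolding norm_exp_div_mult_powr by (intro mult_mono) auto
qed

lemma opnorm_exp_div_lam_mult_powr_ge:
  assumes a: "\<alpha> > 0" and t: "t > 0"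
  shows "2 powr (- \<alpha> / 2) * exp (- \<alpha> / 3) * ((3 * t / \<alpha>) powr (1/3) + 1) powr (- \<alpha>)
         \<le> opnorm (diag (\<lambda>k. exp (of_real t / lam k) * (- lam k) powr (- of_real \<alpha>)))"
proof -
  define s where "s = (3 * t / \<alpha>) powr (1/3)"
  have s: "s > 0" "s ^ 3 = 3 * t / \<alpha>"
    using a t by (simp_all add: s_def powr_realpow[symmetric] powr_powr)
  \<comment> \<open>\<open>s\<close> maximises \<open>exp (- t / n ^ 3) * n powr (- \<alpha>)\<close> over real \<open>n > 0\<close>.\<close>
  obtain k where k: "real (Suc k) = of_int \<lceil>s\<rceil>"
    using \<open>s > 0\<close> by (intro that[of "nat \<lceil>s\<rceil> - 1"]) (simp add: of_nat_diff)
  have "s \<le> real (Suc k)" "real (Suc k) \<le> s + 1"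
    unfolding k by linarith+
  then have "3 * t / \<alpha> \<le> real (Suc k) ^ 3"
    using power_mono[of s "real (Suc k)" 3] s by simp
  then have "t / real (Suc k) ^ 3 \<le> \<alpha> / 3"
    using a by (simp add: field_simps)
  moreover have "(s + 1) powr (- \<alpha>) \<le> real (Suc k) powr (- \<alpha>)"
    using \<open>real (Suc k) \<le> s + 1\<close> a by (intro powr_mono2') auto
  ultimately have "2 powr (- \<alpha> / 2) * exp (- \<alpha> / 3) * (s + 1) powr (- \<alpha>)
      \<le> exp (- t / real (Suc k) ^ 3) * (2 powr (- \<alpha> / 2) * real (Suc k) powr (- \<alpha>))"
    by (simp add: mult.commute mult.left_commute mult_mono)
  also have "\<dots> \<le> cmod (exp (of_real t / lam k) * (- lam k) powr (- of_real \<alpha>))"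
    using a t by (intro norm_exp_div_lam_mult_powr_ge) auto
  also have "\<dots> \<le> opnorm (diag (\<lambda>k. exp (of_real t / lam k) * (- lam k) powr (- of_real \<alpha>)))"
    using a t by (intro norm_le_opnorm_diag[where C=1] norm_exp_div_lam_mult_powr_le_1) auto
  finally show ?thesis unfolding s_def .
qed

lemma liminf_opnorm_exp_div_lam_mult_powr_ge:
  assumes a: "\<alpha> > 0"
  shows "Liminf at_top (\<lambda>t::real. ereal (t powr (\<alpha> / 3) *
           opnorm (diag (\<lambda>k. exp (of_real t / lam k) * (- lam k) powr (- of_real \<alpha>)))))
         \<ge> ereal (1 / 2 powr (\<alpha> / 2) * (\<alpha> / (3 * exp 1)) powr (\<alpha> / 3))"
proof -
  define g where "g t = 2 powr (- \<alpha> / 2) * exp (- \<alpha> / 3) * t powr (\<alpha> / 3) *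
    ((3 * t / \<alpha>) powr (1/3) + 1) powr (- \<alpha>)" for t
  have "(g \<longlongrightarrow> 1 / 2 powr (\<alpha> / 2) * (\<alpha> / (3 * exp 1)) powr (\<alpha> / 3)) at_top"
    unfolding g_def using a
    by (real_asymp simp: powr_powr powr_minus_divide powr_divide powr_mult exp_powr_real
        exp_minus field_simps)
  then have "ereal (1 / 2 powr (\<alpha> / 2) * (\<alpha> / (3 * exp 1)) powr (\<alpha> / 3))
      = Liminf at_top (\<lambda>t. ereal (g t))"
    by (intro lim_imp_Liminf[symmetric]) auto
  also have "\<dots> \<le> Liminf at_top (\<lambda>t::real. ereal (t powr (\<alpha> / 3) *
      opnorm (diag (\<lambda>k. exp (of_real t / lam k) * (- lam k) powr (- of_real \<alpha>)))))"
    using eventually_gt_at_top[of "0::real"]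
  proof (intro Liminf_mono, eventually_elim)
    case (elim t)
    then show ?case
      using mult_left_mono[OF opnorm_exp_div_lam_mult_powr_ge[OF a \<open>t > 0\<close>], of "t powr (\<alpha> / 3)"]
      by (simp add: g_def mult_ac)
  qed
  finally show ?thesis .
qed

theorem mainTheorem5:
  shows "(\<exists>T. generates (diag lam) domA T \<and> poly_stable (diag lam) domA T 1) \<and>
    (\<forall>\<alpha>::real. \<alpha> > 0 \<longrightarrow>
       Liminf at_top (\<lambda>t::real. ereal (t powr (\<alpha> / 3) *
          opnorm (diag (\<lambda>k. exp (of_real t / lam k) * (- lam k) powr (- of_real \<alpha>)))))
       \<ge> ereal (1 / 2 powr (\<alpha> / 2) * (\<alpha> / (3 * exp 1)) powr (\<alpha> / 3)))"
proof (intro conjI allI impI exI)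
  show "generates (diag lam) domA (diag_semigroup lam)"
    unfolding domA_def by (intro generates_diag_semigroup Re_lam_le_0)
  show "poly_stable (diag lam) domA (diag_semigroup lam) 1"
    by (rule poly_stable_diag_semigroup_lam)
qed (rule liminf_opnorm_exp_div_lam_mult_powr_ge)

end
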